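(* Let $n\ge2$. The space of homogeneous quasi-morphisms $F_n\to\mathbb{R}$ that vanish on every element of $\mathrm{cut}_n$ is infinite dimensional.
   Context: Fix a basis $a_1,\dots,a_n$ of $F_n$; $\bar g$ denotes $g^{-1}$. For a cyclically reduced word $w=l_1\cdots l_k$, its Whitehead graph $\Omega(w)$ has $2n$ vertices labeled $a_1,\dots,a_n,\bar a_1,\dots,\bar a_n$; for each pair of adjacent letters $l_il_{i+1}$ there is an edge joining $l_i$ and $\bar l_{i+1}$, and there is additionally an edge joining $l_k$ and $\bar l_1$; multiple edges between the same pair of vertices are replaced by a single edge. The Whitehead graph of a non-cyclically-reduced word is that of its cyclic reduction. A vertex is a cut vertex if removing it and its incident edges disconnects the graph. $\mathrm{cut}_n$ is the set of $w\in F_n$ such that $\Omega(w)$ has a cut vertex. A quasi-morphism $q:F_n\to\mathbb R$ satisfies $\sup_{g,h}|q(gh)-q(g)-q(h)|<\infty$; it is homogeneous if $q(g^k)=kq(g)$ for all $g$, $k\in\mathbb Z$. *)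

theory Defs
  imports Complex_Main
begin

text \<open>Free group F_n: elements are reduced words over letters (i, b) with i < n;
  (i, True) stands for a_{i+1}, (i, False) for its inverse.\<close>

type_synonym letter = "nat \<times> bool"

definition inv_letter :: "letter \<Rightarrow> letter" where
  "inv_letter l = (fst l, \<not> snd l)"

definition reduced :: "letter list \<Rightarrow> bool" where
  "reduced w \<longleftrightarrow> (\<forall>i. Suc i < length w \<longrightarrow> w ! Suc i \<noteq> inv_letter (w ! i))"

definition push_letter :: "letter list \<Rightarrow> letter \<Rightarrow> letter list" where
  "push_letter st x = (case st of [] \<Rightarrow> [x]
      | y # ys \<Rightarrow> (if y = inv_letter x then ys else x # st))"

definition reduce :: "letter list \<Rightarrow> letter list" where
  "reduce w = rev (foldl push_letter [] w)"

definition Fn :: "nat \<Rightarrow> letter list set" where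
  "Fn n = {w. reduced w \<and> set w \<subseteq> {0..<n} \<times> UNIV}"

definition fmult :: "letter list \<Rightarrow> letter list \<Rightarrow> letter list" where
  "fmult u v = reduce (u @ v)"

definition finv :: "letter list \<Rightarrow> letter list" where
  "finv w = rev (map inv_letter w)"

definition fpow :: "letter list \<Rightarrow> int \<Rightarrow> letter list" where
  "fpow w k = (if 0 \<le> k then reduce (concat (replicate (nat k) w))
               else reduce (concat (replicate (nat (- k)) (finv w))))"

function cyc_red :: "letter list \<Rightarrow> letter list" where
  "cyc_red w = (if 2 \<le> length w \<and> last w = inv_letter (hd w)
                then cyc_red (butlast (tl w)) else w)"
  by auto
termination by (relation "measure length") auto

definition wh_vertices :: "nat \<Rightarrow> letter set" where
  "wh_vertices n = {0..<n} \<times> UNIV"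

definition wh_edges :: "letter list \<Rightarrow> (letter \<times> letter) set" where
  "wh_edges w = (let c = cyc_red (reduce w); k = length c in
     (let E = {(c ! i, inv_letter (c ! ((i + 1) mod k))) | i. i < k} in E \<union> E\<inverse>))"

definition graph_connected :: "'a set \<Rightarrow> ('a \<times> 'a) set \<Rightarrow> bool" where
  "graph_connected V E \<longleftrightarrow> (\<forall>u\<in>V. \<forall>v\<in>V. (u, v) \<in> (E \<inter> (V \<times> V))\<^sup>*)"

definition has_cut_vertex :: "nat \<Rightarrow> letter list \<Rightarrow> bool" where
  "has_cut_vertex n w \<longleftrightarrow>
     (\<exists>v\<in>wh_vertices n. \<not> graph_connected (wh_vertices n - {v}) (wh_edges w))"

definition cut :: "nat \<Rightarrow> letter list set" where
  "cut n = {w \<in> Fn n. has_cut_vertex n w}"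

definition quasi_morphism :: "nat \<Rightarrow> (letter list \<Rightarrow> real) \<Rightarrow> bool" where
  "quasi_morphism n q \<longleftrightarrow>
     (\<exists>C. \<forall>g\<in>Fn n. \<forall>h\<in>Fn n. \<bar>q (fmult g h) - q g - q h\<bar> \<le> C)"

definition homogeneous :: "nat \<Rightarrow> (letter list \<Rightarrow> real) \<Rightarrow> bool" where
  "homogeneous n q \<longleftrightarrow> (\<forall>g\<in>Fn n. \<forall>k::int. q (fpow g k) = of_int k * q g)"

text \<open>The real vector space of homogeneous quasi-morphisms F_n \<rightarrow> R vanishing on cut_n
  (functions are taken to be 0 off F_n, so that they are functions on F_n).\<close>
definition hqm_vanishing_cut :: "nat \<Rightarrow> (letter list \<Rightarrow> real) set" where
  "hqm_vanishing_cut n = {q. quasi_morphism n q \<and> homogeneous n q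
      \<and> (\<forall>w\<in>cut n. q w = 0) \<and> (\<forall>w. w \<notin> Fn n \<longrightarrow> q w = 0)}"

definition infinite_dimensional :: "('a \<Rightarrow> real) set \<Rightarrow> bool" where
  "infinite_dimensional S \<longleftrightarrow>
     (\<forall>N::nat. \<exists>qs :: nat \<Rightarrow> 'a \<Rightarrow> real. (\<forall>i<N. qs i \<in> S) \<and>
        (\<forall>c :: nat \<Rightarrow> real. (\<forall>x. (\<Sum>i<N. c i * qs i x) = 0) \<longrightarrow> (\<forall>i<N. c i = 0)))"

end

theory Submission
  imports Defs "HOL-Library.Sublist"
begin

text \<open>
  Counting the occurrences of a nonempty word u in the cyclic reduction of w, minus those in its
  inverse, gives a homogeneous quasi-morphism (a cyclic version of Brooks' counting
  quasi-morphisms): cyclic counts are multiplicative on powers and differ from linear counts by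
  at most |u|, and linear counts are additive up to |u| under concatenation, which together with
  free cancellation (g = x y, h = y^-1 z, g h = x z) bounds the defect.

  We use the words u_i = (a_1 a_2 a_1^-1 a_2) ... (a_1 a_n a_1^-1 a_n) a_1 a_2^(i+1). If u_i
  occurs cyclically in w or in w^-1, each two-letter subword l l' of u_i yields the edge
  {l, l'^-1} of the Whitehead graph of w, so every a_j^(+-1) with j >= 2 is joined to both a_1
  and a_1^-1; for n >= 2 such a graph has no cut vertex, so these quasi-morphisms vanish on cut_n.
  Finally u_i occurs cyclically in u_i, but neither in any u_j^-1, which lacks the letter a_2,
  nor in a shorter u_j, which would force a_1 = a_2: the values of the i-th quasi-morphism at
  u_j form a triangular matrix with nonzero diagonal.
\<close>

lemma triangular_family_independent:
  fixes f :: "nat \<Rightarrow> 'a \<Rightarrow> real"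
  assumes diag: "\<And>i. f i (x i) \<noteq> 0" and below: "\<And>i j. j < i \<Longrightarrow> f i (x j) = 0"
    and sum: "\<forall>y. (\<Sum>i<N. c i * f i y) = 0"
  shows "i < N \<Longrightarrow> c i = 0"
proof (induction i rule: less_induct)
  case (less i)
  have "c j * f j (x i) = 0" if "j \<in> {..<N} - {i}" for j
    using that less below by (cases "j < i") auto
  then have "(\<Sum>j\<in>{..<N} - {i}. c j * f j (x i)) = 0"
    by (rule sum.neutral[rule_format])
  then have "(\<Sum>j<N. c j * f j (x i)) = c i * f i (x i)"
    using less.prems by (subst sum.remove[of _ i]) auto
  then show "c i = 0" using sum diag by simp
qed

section \<open>Free reduction\<close>

lemma inv_letter_pair [simp]: "inv_letter (i, b) = (i, \<not> b)"
  by (simp add: inv_letter_def)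

lemma inv_letter_inv_letter [simp]: "inv_letter (inv_letter l) = l"
  by (simp add: inv_letter_def)

lemma inv_letter_neq [simp]: "inv_letter l \<noteq> l" "l \<noteq> inv_letter l"
  by (cases l; simp)+

lemma reduced_Nil [simp]: "reduced []"
  and reduced_singleton [simp]: "reduced [a]"
  by (auto simp: reduced_def)

lemma reduced_Cons_Cons [simp]:
  "reduced (a # b # w) \<longleftrightarrow> b \<noteq> inv_letter a \<and> reduced (b # w)"
  unfolding reduced_def by (auto simp: nth_Cons' less_Suc_eq_0_disj)

lemma reduced_ConsD: "reduced (a # w) \<Longrightarrow> reduced w"
  by (cases w) auto

lemma reduced_append_iff:
  "reduced (x @ y) \<longleftrightarrow> reduced x \<and> reduced y \<and>
     (x \<noteq> [] \<longrightarrow> y \<noteq> [] \<longrightarrow> hd y \<noteq> inv_letter (last x))"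
proof (induction x)
  case (Cons a x)
  then show ?case by (cases x; cases y) auto
qed simp

lemma reduced_replicate: "reduced (replicate m a)"
proof (induction m)
  case (Suc m)
  then show ?case by (cases m) auto
qed simp

lemma finv_Nil [simp]: "finv [] = []"
  and finv_Cons [simp]: "finv (a # w) = finv w @ [inv_letter a]"
  and finv_append [simp]: "finv (x @ y) = finv y @ finv x"
  and finv_finv [simp]: "finv (finv w) = w"
  and length_finv [simp]: "length (finv w) = length w"
  and finv_eq_Nil_iff [simp]: "finv w = [] \<longleftrightarrow> w = []"
  by (auto simp: finv_def rev_map comp_def)

lemma set_finv: "set (finv w) = inv_letter ` set w"
  by (simp add: finv_def)

lemma hd_finv: "w \<noteq> [] \<Longrightarrow> hd (finv w) = inv_letter (last w)"
  by (simp add: finv_def hd_rev last_map)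

lemma last_finv: "w \<noteq> [] \<Longrightarrow> last (finv w) = inv_letter (hd w)"
  by (simp add: finv_def last_rev hd_map)

lemma nth_finv: "i < length w \<Longrightarrow> finv w ! i = inv_letter (w ! (length w - 1 - i))"
  by (simp add: finv_def rev_nth)

lemma reduced_finv: "reduced w \<Longrightarrow> reduced (finv w)"
proof (induction w)
  case (Cons a w)
  then show ?case
    by (cases w) (auto simp: reduced_append_iff hd_finv last_finv dest: reduced_ConsD)
qed simp

lemma finv_in_Fn: "w \<in> Fn n \<Longrightarrow> finv w \<in> Fn n"
  by (auto simp: Fn_def reduced_finv set_finv)

text \<open>The fold in \<^const>\<open>reduce\<close> keeps the reduced word built so far as a reversed stack.\<close>

lemma reduced_rev_push_letter:
  assumes "reduced (rev st)"
  shows "reduced (rev (push_letter st b))"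
proof (cases st)
  case (Cons y ys)
  then show ?thesis
    using assms by (auto simp: push_letter_def reduced_append_iff)
qed (simp add: push_letter_def)

lemma reduced_rev_foldl_push_letter:
  "reduced (rev st) \<Longrightarrow> reduced (rev (foldl push_letter st w))"
  by (induction w arbitrary: st) (auto intro: reduced_rev_push_letter)

lemma reduced_reduce: "reduced (reduce w)"
  using reduced_rev_foldl_push_letter[of "[]" w] by (simp add: reduce_def)

lemma set_foldl_push_letter: "set (foldl push_letter st w) \<subseteq> set st \<union> set w"
proof (induction w arbitrary: st)
  case (Cons a w)
  have "set (push_letter st a) \<subseteq> insert a (set st)"
    by (auto simp: push_letter_def split: list.splits)
  with Cons.IH[of "push_letter st a"] show ?case by auto
qed simp

lemma set_reduce_subset: "set (reduce w) \<subseteq> set w"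
  using set_foldl_push_letter[of "[]" w] by (simp add: reduce_def)

lemma foldl_push_letter_no_cancel:
  "reduced w \<Longrightarrow> st = [] \<or> w = [] \<or> hd w \<noteq> inv_letter (hd st) \<Longrightarrow>
     foldl push_letter st w = rev w @ st"
proof (induction w arbitrary: st)
  case (Cons a w)
  then have "push_letter st a = a # st"
    by (auto simp: push_letter_def split: list.splits)
  moreover have "foldl push_letter (a # st) w = rev w @ a # st"
    using Cons by (cases w) (auto dest: reduced_ConsD)
  ultimately show ?case by simp
qed simp

lemma reduce_id: "reduced w \<Longrightarrow> reduce w = w"
  using foldl_push_letter_no_cancel[of w "[]"] by (simp add: reduce_def)

lemma push_letter_cancel:
  assumes "reduced (rev st)"
  shows "push_letter (push_letter st (inv_letter b)) b = st"
proof (cases st)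
  case (Cons y ys)
  show ?thesis
  proof (cases "y = b")
    case True
    have "ys = [] \<or> hd ys \<noteq> inv_letter b"
      using assms Cons True by (cases ys) (auto simp: reduced_append_iff)
    then show ?thesis using Cons True by (auto simp: push_letter_def split: list.splits)
  qed (use Cons in \<open>auto simp: push_letter_def\<close>)
qed (simp add: push_letter_def)

lemma foldl_push_letter_reduce:
  "reduced (rev st) \<Longrightarrow> foldl push_letter st (reduce w) = foldl push_letter st w"
proof (induction w rule: rev_induct)
  case (snoc b w)
  define S where "S = foldl push_letter [] w"
  have IH: "foldl push_letter st (rev S) = foldl push_letter st w"
    using snoc by (simp add: reduce_def S_def)
  show ?case
  proof (cases "S \<noteq> [] \<and> hd S = inv_letter b")
    case True
    then obtain ss where S: "S = inv_letter b # ss" by (cases S) auto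
    have "reduced (rev (foldl push_letter st (rev ss)))"
      using reduced_rev_foldl_push_letter snoc.prems by blast
    then have "foldl push_letter st (rev ss) = foldl push_letter st (w @ [b])"
      using push_letter_cancel by (simp flip: IH add: S)
    moreover have "reduce (w @ [b]) = rev ss"
      by (simp add: reduce_def S_def[symmetric] S push_letter_def)
    ultimately show ?thesis by simp
  next
    case False
    then have "push_letter S b = b # S"
      by (auto simp: push_letter_def split: list.splits)
    then show ?thesis using IH by (simp add: reduce_def S_def[symmetric])
  qed
qed (simp add: reduce_def)

lemma reduce_append_reduce_right: "reduce (x @ reduce y) = reduce (x @ y)"
  using foldl_push_letter_reduce[OF reduced_rev_foldl_push_letter[of "[]" x]]
  by (simp add: reduce_def)

lemma foldl_push_letter_finv_cancel:
  "reduced (rev st) \<Longrightarrow> foldl push_letter st (finv t @ t) = st"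
proof (induction t arbitrary: st)
  case (Cons a t)
  let ?S = "foldl push_letter st (finv t)"
  have "reduced (rev ?S)" using Cons.prems by (rule reduced_rev_foldl_push_letter)
  then have "foldl push_letter st (finv (a # t) @ a # t) = foldl push_letter ?S t"
    by (simp add: push_letter_cancel)
  also have "\<dots> = st" using Cons by simp
  finally show ?case .
qed simp

lemma reduce_cancel_middle: "reduce (x @ finv t @ t @ y) = reduce (x @ y)"
  using foldl_push_letter_finv_cancel[OF reduced_rev_foldl_push_letter[of "[]" x]]
  by (simp add: reduce_def flip: append_assoc)

lemma foldl_push_letter_rev_cancellation:
  assumes "reduced g" "reduced h"
  shows "\<exists>x y z. g = x @ y \<and> h = finv y @ z \<and> foldl push_letter (rev g) h = rev (x @ z)"
  using assms
proof (induction h arbitrary: g)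
  case Nil
  show ?case by (intro exI[of _ g] exI[of _ "[]"]) simp
next
  case (Cons b h)
  have "reduced h" using Cons.prems(2) by (rule reduced_ConsD)
  show ?case
  proof (cases "g \<noteq> [] \<and> last g = inv_letter b")
    case True
    then obtain g' where g: "g = g' @ [inv_letter b]"
      by (metis append_butlast_last_id)
    have "reduced g'" using Cons.prems(1) g by (simp add: reduced_append_iff)
    then obtain x y z where xyz: "g' = x @ y" "h = finv y @ z"
      "foldl push_letter (rev g') h = rev (x @ z)"
      using Cons.IH \<open>reduced h\<close> by blast
    have "g = x @ (y @ [inv_letter b])" "b # h = finv (y @ [inv_letter b]) @ z"
      "foldl push_letter (rev g) (b # h) = rev (x @ z)"
      using g xyz by (simp_all add: push_letter_def)
    then show ?thesis by blast
  next
    case False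
    then have push: "push_letter (rev g) b = rev (g @ [b])"
      by (cases g rule: rev_cases) (auto simp: push_letter_def)
    have "reduced (g @ [b])" using Cons.prems(1) False by (auto simp: reduced_append_iff)
    then obtain x y z where xyz: "g @ [b] = x @ y" "h = finv y @ z"
      "foldl push_letter (rev (g @ [b])) h = rev (x @ z)"
      using Cons.IH \<open>reduced h\<close> by blast
    have "y = []"
    proof (rule ccontr)
      assume "y \<noteq> []"
      then have "last y = b" using xyz(1) by (metis last_appendR last_snoc)
      then have "h \<noteq> [] \<and> hd h = inv_letter b" using xyz(2) \<open>y \<noteq> []\<close> by (simp add: hd_finv)
      then show False using Cons.prems(2) by (cases h) auto
    qed
    then have "foldl push_letter (rev g) (b # h) = rev (g @ b # h)"
      using xyz push by simp
    moreover have "g = g @ []" "b # h = finv [] @ b # h" by simp_all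
    ultimately show ?thesis by blast
  qed
qed

lemma fmult_cancellation:
  assumes "reduced g" "reduced h"
  shows "\<exists>x y z. g = x @ y \<and> h = finv y @ z \<and> fmult g h = x @ z"
proof -
  obtain x y z where "g = x @ y" "h = finv y @ z"
    "foldl push_letter (rev g) h = rev (x @ z)"
    using foldl_push_letter_rev_cancellation[OF assms] by blast
  moreover have "foldl push_letter [] g = rev g"
    using foldl_push_letter_no_cancel[OF assms(1), of "[]"] by simp
  ultimately show ?thesis by (auto simp: fmult_def reduce_def simp del: rev_append)
qed

lemma fmult_in_Fn: "g \<in> Fn n \<Longrightarrow> h \<in> Fn n \<Longrightarrow> fmult g h \<in> Fn n"
  using reduced_reduce set_reduce_subset[of "g @ h"] by (auto simp: Fn_def fmult_def)

section \<open>Cyclic reduction and powers\<close>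

definition cyclically_reduced :: "letter list \<Rightarrow> bool" where
  "cyclically_reduced c \<longleftrightarrow> (c \<noteq> [] \<longrightarrow> last c \<noteq> inv_letter (hd c))"

declare cyc_red.simps [simp del]

lemma cyc_red_step:
  "2 \<le> length w \<Longrightarrow> last w = inv_letter (hd w) \<Longrightarrow> cyc_red w = cyc_red (butlast (tl w))"
  by (subst cyc_red.simps) simp

lemma cyc_red_stop:
  assumes "\<not> (2 \<le> length w \<and> last w = inv_letter (hd w))"
  shows "cyc_red w = w"
  by (subst cyc_red.simps) (simp only: if_not_P[OF assms])

lemma cyc_red_Nil [simp]: "cyc_red [] = []"
  by (simp add: cyc_red_stop)

lemma cyc_red_decomp: "\<exists>t. w = t @ cyc_red w @ finv t"
proof (induction w rule: cyc_red.induct)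
  case (1 w)
  show ?case
  proof (cases "2 \<le> length w \<and> last w = inv_letter (hd w)")
    case True
    then have c: "cyc_red w = cyc_red (butlast (tl w))"
      by (simp add: cyc_red_step)
    obtain t where t: "butlast (tl w) = t @ cyc_red (butlast (tl w)) @ finv t"
      using 1 True by blast
    have "w = hd w # butlast (tl w) @ [last w]"
      using True[THEN conjunct1] by (cases w) auto
    then have w: "w = hd w # butlast (tl w) @ [inv_letter (hd w)]"
      using True by simp
    have "w = (hd w # t) @ cyc_red w @ finv (hd w # t)"
      by (subst w, subst t) (simp add: c)
    then show ?thesis by blast
  qed (auto simp: cyc_red_stop intro: exI[of _ "[]"])
qed

lemma cyclically_reduced_cyc_red: "cyclically_reduced (cyc_red w)"
proof (induction w rule: cyc_red.induct)
  case (1 w)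
  show ?case
  proof (cases "2 \<le> length w \<and> last w = inv_letter (hd w)")
    case False
    then have "w \<noteq> [] \<Longrightarrow> last w \<noteq> inv_letter (hd w)"
      by (cases w) (auto simp: Suc_le_eq)
    then show ?thesis using False by (simp add: cyc_red_stop cyclically_reduced_def)
  qed (use 1 in \<open>simp add: cyc_red_step\<close>)
qed

lemma cyc_red_id: "cyclically_reduced c \<Longrightarrow> cyc_red c = c"
  by (rule cyc_red_stop) (auto simp: cyclically_reduced_def)

lemma cyc_red_conj: "cyc_red (t @ d @ finv t) = cyc_red d"
proof (induction t)
  case (Cons a t)
  let ?w = "(a # t) @ d @ finv (a # t)"
  have "cyc_red ?w = cyc_red (butlast (tl ?w))"
    by (rule cyc_red_step) auto
  then show ?case using Cons by (simp flip: append_assoc)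
qed simp

lemma cyclically_reduced_finv: "cyclically_reduced c \<Longrightarrow> cyclically_reduced (finv c)"
  by (cases "c = []") (auto simp: cyclically_reduced_def hd_finv last_finv)

lemma cyc_red_finv: "cyc_red (finv w) = finv (cyc_red w)"
proof -
  obtain t where "w = t @ cyc_red w @ finv t" using cyc_red_decomp by blast
  then have "finv w = t @ finv (cyc_red w) @ finv t" by (metis append_assoc finv_append finv_finv)
  then show ?thesis
    by (simp add: cyc_red_conj cyc_red_id cyclically_reduced_finv cyclically_reduced_cyc_red)
qed

abbreviation wpow :: "letter list \<Rightarrow> nat \<Rightarrow> letter list" where
  "wpow d m \<equiv> concat (replicate m d)"

lemma hd_wpow: "d \<noteq> [] \<Longrightarrow> 1 \<le> m \<Longrightarrow> hd (wpow d m) = hd d"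
  by (cases m) auto

lemma last_wpow: "d \<noteq> [] \<Longrightarrow> 1 \<le> m \<Longrightarrow> last (wpow d m) = last d"
proof (induction m)
  case (Suc m)
  then show ?case by (cases m) auto
qed simp

lemma wpow_eq_Nil_iff: "wpow d m = [] \<longleftrightarrow> d = [] \<or> m = 0"
  by (cases m) auto

lemma length_wpow [simp]: "length (wpow d m) = m * length d"
  by (induction m) auto

lemma nth_wpow: "j < m * length d \<Longrightarrow> wpow d m ! j = d ! (j mod length d)"
proof (induction m arbitrary: j)
  case (Suc m)
  show ?case
  proof (cases "j < length d")
    case False
    then have "j - length d < m * length d" using Suc.prems by simp
    then show ?thesis using False Suc.IH by (simp add: nth_append le_mod_geq)
  qed (simp add: nth_append)
qed simp

lemma finv_wpow: "finv (wpow d m) = wpow (finv d) m"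
proof (induction m)
  case (Suc m)
  have "wpow d (Suc m) = wpow d m @ d" by (simp flip: replicate_append_same)
  then show ?case using Suc by simp
qed simp

lemma reduced_wpow: "reduced d \<Longrightarrow> cyclically_reduced d \<Longrightarrow> reduced (wpow d m)"
proof (induction m)
  case (Suc m)
  then show ?case
    by (cases "d = [] \<or> m = 0")
      (auto simp: reduced_append_iff cyclically_reduced_def hd_wpow wpow_eq_Nil_iff)
qed simp

lemma cyclically_reduced_wpow: "cyclically_reduced d \<Longrightarrow> cyclically_reduced (wpow d m)"
  by (cases "d = [] \<or> m = 0")
    (auto simp: cyclically_reduced_def hd_wpow last_wpow wpow_eq_Nil_iff)

lemma reduced_conj_wpow:
  assumes "reduced (t @ d @ finv t)" "cyclically_reduced d" "1 \<le> m"
  shows "reduced (t @ wpow d m @ finv t)"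
proof (cases "d = []")
  case False
  then show ?thesis
    using assms reduced_wpow[OF _ assms(2), of m]
    by (auto simp: reduced_append_iff hd_wpow last_wpow wpow_eq_Nil_iff)
qed (use assms in simp)

lemma reduce_wpow_conj:
  assumes "reduced (t @ d @ finv t)" "cyclically_reduced d" "1 \<le> m"
  shows "reduce (wpow (t @ d @ finv t) m) = t @ wpow d m @ finv t"
  using assms(3)
proof (induction m rule: dec_induct)
  case base
  show ?case using assms(1) by (simp add: reduce_id)
next
  case (step m)
  have "reduce (wpow (t @ d @ finv t) (Suc m))
      = reduce ((t @ d) @ finv t @ t @ (wpow d m @ finv t))"
    using reduce_append_reduce_right[of "t @ d @ finv t" "wpow (t @ d @ finv t) m"]
    by (simp add: step.IH)
  also have "\<dots> = reduce ((t @ d) @ wpow d m @ finv t)"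
    by (rule reduce_cancel_middle)
  also have "\<dots> = t @ wpow d (Suc m) @ finv t"
    using reduced_conj_wpow[OF assms(1,2), of "Suc m"] by (simp add: reduce_id)
  finally show ?case .
qed

lemma fpow_in_Fn:
  assumes "g \<in> Fn n"
  shows "fpow g k \<in> Fn n"
proof -
  have "set g \<subseteq> {0..<n} \<times> UNIV" "set (finv g) \<subseteq> {0..<n} \<times> UNIV"
    using assms finv_in_Fn by (auto simp: Fn_def)
  then have "set (fpow g k) \<subseteq> {0..<n} \<times> UNIV"
    unfolding fpow_def using set_reduce_subset by (fastforce split: if_splits)
  then show ?thesis by (simp add: Fn_def fpow_def reduced_reduce)
qed

lemma fpow_neg: "k < 0 \<Longrightarrow> fpow g k = fpow (finv g) (- k)"
  by (simp add: fpow_def)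

lemma cyc_red_fpow:
  assumes "reduced g" "0 < k"
  shows "cyc_red (fpow g k) = wpow (cyc_red g) (nat k)"
proof -
  obtain t where t: "g = t @ cyc_red g @ finv t" using cyc_red_decomp by blast
  have "fpow g k = t @ wpow (cyc_red g) (nat k) @ finv t"
    using reduce_wpow_conj[of t "cyc_red g" "nat k"] assms t cyclically_reduced_cyc_red
    by (simp add: fpow_def)
  then show ?thesis
    by (simp add: cyc_red_conj cyc_red_id cyclically_reduced_wpow cyclically_reduced_cyc_red)
qed

section \<open>Counting quasi-morphisms\<close>

definition occ_positions :: "letter list \<Rightarrow> letter list \<Rightarrow> nat set" where
  "occ_positions u w = {p. p + length u \<le> length w \<and> (\<forall>k<length u. w ! (p + k) = u ! k)}"

definition occ_count :: "letter list \<Rightarrow> letter list \<Rightarrow> nat" where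
  "occ_count u w = card (occ_positions u w)"

text \<open>When \<open>u\<close> is longer than \<open>c\<close>, a cyclic occurrence wraps around \<open>c\<close> more than once.\<close>

definition cyc_occ_positions :: "letter list \<Rightarrow> letter list \<Rightarrow> nat set" where
  "cyc_occ_positions u c =
     {p. p < length c \<and> (\<forall>k<length u. c ! ((p + k) mod length c) = u ! k)}"

definition cyc_occ_count :: "letter list \<Rightarrow> letter list \<Rightarrow> nat" where
  "cyc_occ_count u c = card (cyc_occ_positions u c)"

lemma finite_occ_positions [simp]: "finite (occ_positions u w)"
  by (rule finite_subset[of _ "{..length w}"]) (auto simp: occ_positions_def)

lemma finite_cyc_occ_positions [simp]: "finite (cyc_occ_positions u c)"
  by (rule finite_subset[of _ "{..<length c}"]) (auto simp: cyc_occ_positions_def)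

lemma occ_positions_append_subset:
  "occ_positions u (x @ y) \<subseteq>
     (occ_positions u x \<union> (\<lambda>p. p + length x) ` occ_positions u y) \<union> {length x - length u..<length x}"
proof
  fix p assume p: "p \<in> occ_positions u (x @ y)"
  consider "p + length u \<le> length x" | "length x \<le> p" | "p \<in> {length x - length u..<length x}"
    by fastforce
  then show "p \<in> (occ_positions u x \<union> (\<lambda>p. p + length x) ` occ_positions u y) \<union>
      {length x - length u..<length x}"
  proof cases
    case 1
    then have "p \<in> occ_positions u x" using p by (auto simp: occ_positions_def nth_append)
    then show ?thesis by blast
  next
    case 2
    then have "p - length x \<in> occ_positions u y" using p by (auto simp: occ_positions_def nth_append)
    then show ?thesis using 2 by (auto intro: image_eqI[of _ _ "p - length x"])
  qed blast
qed

lemma occ_count_append: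
  assumes "u \<noteq> []"
  shows "occ_count u x + occ_count u y \<le> occ_count u (x @ y)"
    and "occ_count u (x @ y) \<le> occ_count u x + occ_count u y + length u"
proof -
  let ?Y = "(\<lambda>p. p + length x) ` occ_positions u y"
  have disjoint: "occ_positions u x \<inter> ?Y = {}"
    using assms by (auto simp: occ_positions_def)
  have card_Y: "card ?Y = occ_count u y"
    unfolding occ_count_def by (rule card_image) (auto simp: inj_on_def)
  have sum: "card (occ_positions u x \<union> ?Y) = occ_count u x + occ_count u y"
    using disjoint card_Y by (simp add: occ_count_def card_Un_disjoint)
  have "occ_positions u x \<union> ?Y \<subseteq> occ_positions u (x @ y)"
    by (auto simp: occ_positions_def nth_append)
  then have "card (occ_positions u x \<union> ?Y) \<le> occ_count u (x @ y)"
    unfolding occ_count_def by (intro card_mono) auto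
  then show "occ_count u x + occ_count u y \<le> occ_count u (x @ y)"
    using sum by simp
  have "occ_positions u (x @ y) \<subseteq>
      (occ_positions u x \<union> ?Y) \<union> {length x - length u..<length x}"
    by (rule occ_positions_append_subset)
  then have "occ_count u (x @ y) \<le> card ((occ_positions u x \<union> ?Y) \<union> {length x - length u..<length x})"
    unfolding occ_count_def by (intro card_mono) auto
  also have "\<dots> \<le> card (occ_positions u x \<union> ?Y) + card {length x - length u..<length x}"
    by (rule card_Un_le)
  finally show "occ_count u (x @ y) \<le> occ_count u x + occ_count u y + length u"
    using sum by simp
qed

lemma cyc_occ_count_bounds:
  assumes "u \<noteq> []"
  shows "occ_count u c \<le> cyc_occ_count u c"
    and "cyc_occ_count u c \<le> occ_count u c + length u"
proof -
  have "occ_positions u c \<subseteq> cyc_occ_positions u c"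
    using assms by (cases u) (auto simp: occ_positions_def cyc_occ_positions_def)
  then show "occ_count u c \<le> cyc_occ_count u c"
    unfolding occ_count_def cyc_occ_count_def by (intro card_mono) auto
  have "cyc_occ_positions u c \<subseteq> occ_positions u c \<union> {length c - length u..<length c}"
    by (auto simp: occ_positions_def cyc_occ_positions_def)
  then have "cyc_occ_count u c \<le> card (occ_positions u c \<union> {length c - length u..<length c})"
    unfolding cyc_occ_count_def by (intro card_mono) auto
  also have "\<dots> \<le> occ_count u c + card {length c - length u..<length c}"
    unfolding occ_count_def by (rule card_Un_le)
  finally show "cyc_occ_count u c \<le> occ_count u c + length u" by simp
qed

lemma card_mod_preimage:
  assumes "S \<subseteq> {..<L}"
  shows "card {p. p < m * L \<and> p mod L \<in> S} = m * card S"
proof (induction m)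
  case (Suc m)
  let ?A = "{p. p < m * L \<and> p mod L \<in> S}" and ?B = "(\<lambda>s. s + m * L) ` S"
  have "{p. p < Suc m * L \<and> p mod L \<in> S} = ?A \<union> ?B"
  proof (intro set_eqI iffI)
    fix p assume p: "p \<in> {p. p < Suc m * L \<and> p mod L \<in> S}"
    show "p \<in> ?A \<union> ?B"
    proof (cases "p < m * L")
      case False
      have "p mod L = (p - m * L + m * L) mod L" using False by simp
      also have "\<dots> = (p - m * L) mod L" by (rule mod_mult_self1)
      also have "\<dots> = p - m * L" using p False by (intro mod_less) (simp add: less_diff_conv2)
      finally have "p mod L = p - m * L" .
      then show ?thesis using p False by (auto intro!: image_eqI[of _ _ "p - m * L"])
    qed (use p in auto)
  next
    fix p assume "p \<in> ?A \<union> ?B"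
    then show "p \<in> {p. p < Suc m * L \<and> p mod L \<in> S}" using assms by auto
  qed
  moreover have "card ?B = card S"
    by (rule card_image) (auto simp: inj_on_def)
  moreover have "finite S" using assms finite_subset by blast
  moreover have "?A \<inter> ?B = {}" by auto
  ultimately show ?case
    using Suc by (simp add: card_Un_disjoint)
qed simp

lemma cyc_occ_count_wpow: "cyc_occ_count u (wpow d m) = m * cyc_occ_count u d"
proof (cases "d = [] \<or> m = 0")
  case False
  let ?L = "length d"
  have shift: "wpow d m ! ((p + k) mod (m * ?L)) = d ! ((p mod ?L + k) mod ?L)" for p k
    using False by (simp add: nth_wpow mod_mod_cancel mod_add_left_eq)
  have "cyc_occ_positions u (wpow d m) = {p. p < m * ?L \<and> p mod ?L \<in> cyc_occ_positions u d}"
    using False by (auto simp: cyc_occ_positions_def shift)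
  moreover have "cyc_occ_positions u d \<subseteq> {..<?L}" by (auto simp: cyc_occ_positions_def)
  ultimately show ?thesis unfolding cyc_occ_count_def by (simp add: card_mod_preimage)
qed (auto simp: cyc_occ_count_def cyc_occ_positions_def)

lemma cyc_occ_positions_eq_empty_if_missing:
  assumes "k < length u" "u ! k \<notin> set c"
  shows "cyc_occ_positions u c = {}"
proof (rule ccontr)
  assume "cyc_occ_positions u c \<noteq> {}"
  then obtain p where "p < length c" "c ! ((p + k) mod length c) = u ! k"
    using assms(1) by (auto simp: cyc_occ_positions_def)
  then show False using assms(2) by (metis mod_less_divisor nth_mem zero_less_iff_neq_zero not_less0)
qed

lemma cyc_occ_positions_eq_empty_if_longer:
  assumes "length c < length u" "u ! length c \<noteq> u ! 0"
  shows "cyc_occ_positions u c = {}"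
proof (rule ccontr)
  assume "cyc_occ_positions u c \<noteq> {}"
  then obtain p where p: "\<forall>k<length u. c ! ((p + k) mod length c) = u ! k"
    by (auto simp: cyc_occ_positions_def)
  have "0 < length u" using assms(1) by linarith
  have "u ! length c = c ! (p mod length c)" "u ! 0 = c ! (p mod length c)"
    using assms(1) \<open>0 < length u\<close> p[rule_format, of "length c"] p[rule_format, of 0]
    by simp_all
  then show False using assms(2) by simp
qed

definition brooks :: "letter list \<Rightarrow> letter list \<Rightarrow> real" where
  "brooks u w = real (occ_count u w) - real (occ_count u (finv w))"

definition cyc_brooks :: "letter list \<Rightarrow> letter list \<Rightarrow> real" where
  "cyc_brooks u c = real (cyc_occ_count u c) - real (cyc_occ_count u (finv c))"

definition hom_brooks :: "nat \<Rightarrow> letter list \<Rightarrow> letter list \<Rightarrow> real" where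
  "hom_brooks n u w = (if w \<in> Fn n then cyc_brooks u (cyc_red w) else 0)"

lemma brooks_finv: "brooks u (finv w) = - brooks u w"
  by (simp add: brooks_def)

lemma cyc_brooks_Nil [simp]: "cyc_brooks u [] = 0"
  by (simp add: cyc_brooks_def)

lemma cyc_brooks_finv: "cyc_brooks u (finv c) = - cyc_brooks u c"
  by (simp add: cyc_brooks_def)

lemma cyc_brooks_wpow: "cyc_brooks u (wpow c m) = m * cyc_brooks u c"
  by (simp add: cyc_brooks_def finv_wpow cyc_occ_count_wpow right_diff_distrib)

lemma brooks_append:
  assumes "u \<noteq> []"
  shows "\<bar>brooks u (x @ y) - brooks u x - brooks u y\<bar> \<le> length u"
  using occ_count_append[OF assms, of x y] occ_count_append[OF assms, of "finv y" "finv x"]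
  unfolding brooks_def by simp

lemma cyc_brooks_brooks:
  assumes "u \<noteq> []"
  shows "\<bar>cyc_brooks u c - brooks u c\<bar> \<le> length u"
  using cyc_occ_count_bounds[OF assms, of c] cyc_occ_count_bounds[OF assms, of "finv c"]
  unfolding brooks_def cyc_brooks_def by linarith

lemma cyc_brooks_cyc_red:
  assumes "u \<noteq> []"
  shows "\<bar>cyc_brooks u (cyc_red w) - brooks u w\<bar> \<le> 3 * real (length u)"
proof -
  obtain t where t: "w = t @ cyc_red w @ finv t" using cyc_red_decomp by blast
  let ?c = "cyc_red w"
  have "\<bar>brooks u (t @ ?c @ finv t) - brooks u t - brooks u (?c @ finv t)\<bar> \<le> length u"
    "\<bar>brooks u (?c @ finv t) - brooks u ?c - brooks u (finv t)\<bar> \<le> length u"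
    "\<bar>cyc_brooks u ?c - brooks u ?c\<bar> \<le> length u"
    by (rule brooks_append[OF assms] cyc_brooks_brooks[OF assms])+
  then show ?thesis using t brooks_finv[of u t] by (simp add: abs_le_iff)
qed

lemma quasi_morphism_hom_brooks:
  assumes "u \<noteq> []"
  shows "quasi_morphism n (hom_brooks n u)"
  unfolding quasi_morphism_def
proof (intro exI[of _ "12 * real (length u)"] ballI)
  fix g h assume g: "g \<in> Fn n" and h: "h \<in> Fn n"
  have "reduced g" "reduced h" using g h by (simp_all add: Fn_def)
  then obtain x y z where xyz: "g = x @ y" "h = finv y @ z" "fmult g h = x @ z"
    using fmult_cancellation by blast
  have "\<bar>brooks u (x @ z) - brooks u x - brooks u z\<bar> \<le> length u"
    "\<bar>brooks u (x @ y) - brooks u x - brooks u y\<bar> \<le> length u"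
    "\<bar>brooks u (finv y @ z) - brooks u (finv y) - brooks u z\<bar> \<le> length u"
    by (rule brooks_append[OF assms])+
  then have "\<bar>brooks u (fmult g h) - brooks u g - brooks u h\<bar> \<le> 3 * real (length u)"
    using xyz brooks_finv[of u y] by (simp add: abs_le_iff)
  then show "\<bar>hom_brooks n u (fmult g h) - hom_brooks n u g - hom_brooks n u h\<bar>
      \<le> 12 * real (length u)"
    using g h fmult_in_Fn[OF g h] cyc_brooks_cyc_red[OF assms, of g]
      cyc_brooks_cyc_red[OF assms, of h] cyc_brooks_cyc_red[OF assms, of "fmult g h"]
    unfolding hom_brooks_def by (simp add: abs_le_iff)
qed

lemma hom_brooks_fpow_pos:
  assumes "g \<in> Fn n" "0 < k"
  shows "hom_brooks n u (fpow g k) = k * hom_brooks n u g"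
  using assms fpow_in_Fn[OF assms(1)]
  by (simp add: hom_brooks_def cyc_red_fpow Fn_def cyc_brooks_wpow)

lemma homogeneous_hom_brooks: "homogeneous n (hom_brooks n u)"
  unfolding homogeneous_def
proof (intro ballI allI)
  fix g and k :: int
  assume g: "g \<in> Fn n"
  consider "0 < k" | "k = 0" | "k < 0" by linarith
  then show "hom_brooks n u (fpow g k) = k * hom_brooks n u g"
  proof cases
    case 1
    with g show ?thesis by (rule hom_brooks_fpow_pos)
  next
    case 2
    then show ?thesis by (simp add: hom_brooks_def fpow_def reduce_def Fn_def)
  next
    case 3
    have "hom_brooks n u (finv g) = - hom_brooks n u g"
      using g finv_in_Fn[OF g] by (simp add: hom_brooks_def cyc_red_finv cyc_brooks_finv)
    then show ?thesis
      using 3 g finv_in_Fn hom_brooks_fpow_pos[of "finv g" n "- k" u] by (simp add: fpow_neg)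
  qed
qed

section \<open>Whitehead graphs\<close>

definition whitehead_pairs :: "letter list \<Rightarrow> (letter \<times> letter) set" where
  "whitehead_pairs c = {(c ! i, inv_letter (c ! ((i + 1) mod length c))) | i. i < length c}"

lemma wh_edges_eq:
  "wh_edges w = whitehead_pairs (cyc_red (reduce w)) \<union> (whitehead_pairs (cyc_red (reduce w)))\<inverse>"
  by (simp add: wh_edges_def whitehead_pairs_def Let_def)

lemma whitehead_pairs_finv:
  assumes "(a, b) \<in> whitehead_pairs (finv c)"
  shows "(b, a) \<in> whitehead_pairs c"
proof -
  let ?L = "length c"
  obtain i where i: "i < ?L" "a = finv c ! i" "b = inv_letter (finv c ! ((i + 1) mod ?L))"
    using assms by (auto simp: whitehead_pairs_def)
  define j where "j = ?L - 1 - (i + 1) mod ?L"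
  have L: "0 < ?L" using i(1) by linarith
  have "j < ?L" "c ! j = b"
    using i(3) nth_finv[of "(i + 1) mod ?L" c] L by (simp_all add: j_def)
  moreover have "(j + 1) mod ?L = ?L - 1 - i"
  proof (cases "i + 1 < ?L")
    case False
    then have "i + 1 = ?L" using i(1) by simp
    then show ?thesis using L by (simp add: j_def)
  qed (simp add: j_def)
  then have "inv_letter (c ! ((j + 1) mod ?L)) = a"
    using i(1,2) by (simp add: nth_finv)
  ultimately show ?thesis unfolding whitehead_pairs_def by blast
qed

lemma cyc_occ_whitehead_pair:
  assumes "cyc_occ_positions u c \<noteq> {}" "sublist [a, b] u"
  shows "(a, inv_letter b) \<in> whitehead_pairs c"
proof -
  obtain p where p: "p < length c" "\<forall>k<length u. c ! ((p + k) mod length c) = u ! k"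
    using assms(1) by (auto simp: cyc_occ_positions_def)
  obtain xs ys where u: "u = xs @ a # b # ys"
    using assms(2) by (auto simp: sublist_def)
  let ?i = "(p + length xs) mod length c"
  have "c ! ?i = a" "c ! ((p + Suc (length xs)) mod length c) = b"
    using p(2) u by (auto simp: nth_append dest: spec[of _ "length xs"] spec[of _ "Suc (length xs)"])
  moreover have "(?i + 1) mod length c = (p + Suc (length xs)) mod length c"
    by (simp add: mod_Suc_eq)
  moreover have "?i < length c" using p(1) by (intro mod_less_divisor) linarith
  ultimately show ?thesis unfolding whitehead_pairs_def by force
qed

lemma cyc_occ_wh_edges:
  assumes "reduced w" "sublist [a, b] u"
    and "cyc_occ_positions u (cyc_red w) \<noteq> {} \<or> cyc_occ_positions u (finv (cyc_red w)) \<noteq> {}"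
  shows "(a, inv_letter b) \<in> wh_edges w" "(inv_letter b, a) \<in> wh_edges w"
proof -
  let ?c = "cyc_red w"
  from assms(3) have "(a, inv_letter b) \<in> whitehead_pairs ?c \<union> (whitehead_pairs ?c)\<inverse>"
  proof
    assume "cyc_occ_positions u (finv ?c) \<noteq> {}"
    then have "(a, inv_letter b) \<in> whitehead_pairs (finv ?c)"
      using assms(2) by (rule cyc_occ_whitehead_pair)
    then show ?thesis by (auto dest: whitehead_pairs_finv)
  qed (use assms(2) cyc_occ_whitehead_pair in blast)
  then show "(a, inv_letter b) \<in> wh_edges w" "(inv_letter b, a) \<in> wh_edges w"
    using assms(1) by (auto simp: wh_edges_eq reduce_id)
qed

lemma graph_connected_remove_vertex:
  assumes n: "2 \<le> n" and "sym E"
    and E: "\<And>i s. 1 \<le> i \<Longrightarrow> i < n \<Longrightarrow> ((i, s), (0, True)) \<in> E \<and> ((i, s), (0, False)) \<in> E"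
    and "v \<in> wh_vertices n"
  shows "graph_connected (wh_vertices n - {v}) E"
proof -
  let ?V = "wh_vertices n - {v}"
  let ?R = "(E \<inter> (?V \<times> ?V))\<^sup>*"
  have "sym (E \<inter> (?V \<times> ?V))" using \<open>sym E\<close> by (auto simp: sym_def)
  then have R_sym: "(y, x) \<in> ?R" if "(x, y) \<in> ?R" for x y
    using that by (metis sym_conv_converse_eq rtrancl_converseI)
  define r where "r = (if v = (0, True) then (0, False) else (0::nat, True))"
  have r: "r \<in> ?V" using n by (auto simp: r_def wh_vertices_def)
  have to_r: "(x, r) \<in> ?R" if x: "x \<in> ?V" for x
  proof (cases "fst x = 0")
    case False
    then have "(x, r) \<in> E" using E[of "fst x" "snd x"] x by (auto simp: r_def wh_vertices_def)
    then show ?thesis using x r by auto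
  next
    case True
    show ?thesis
    proof (cases "x = r")
      case False
      obtain b where "x = (0, b)" using True by (cases x) auto
      with False x have "v \<noteq> (0, True)" by (auto simp: r_def)
      with False \<open>x = (0, b)\<close> have r0: "r = (0, True)" and x0: "x = (0, False)"
        by (auto simp: r_def)
      have "fst v \<noteq> 0" using x x0 \<open>v \<noteq> (0, True)\<close> by (cases v) auto
      \<comment> \<open>Both letters of index 0 survive, so they are joined through a letter of index 1.\<close>
      define z where "z = (if v = (1, True) then (1::nat, False) else (1, True))"
      have z: "z \<in> ?V" using n \<open>fst v \<noteq> 0\<close> by (auto simp: z_def wh_vertices_def)
      have "(z, x) \<in> E" "(z, r) \<in> E"
        using E[of 1 "snd z"] n x0 r0 by (auto simp: z_def)
      then have "(z, x) \<in> ?R" "(z, r) \<in> ?R" using x z r by auto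
      then show ?thesis using R_sym by (blast intro: rtrancl_trans)
    qed simp
  qed
  show ?thesis
    unfolding graph_connected_def using to_r R_sym by (blast intro: rtrancl_trans)
qed

section \<open>The witness words\<close>

fun conj_blocks :: "nat list \<Rightarrow> letter list" where
  "conj_blocks [] = [(0, True)]"
| "conj_blocks (j # js) = (0, True) # (j, True) # (0, False) # (j, True) # conj_blocks js"

definition witness :: "nat \<Rightarrow> nat \<Rightarrow> letter list" where
  "witness n i = conj_blocks [1..<n] @ replicate (Suc i) (1, True)"

lemma conj_blocks_eq_Cons: "\<exists>ys. conj_blocks js = (0, True) # ys"
  by (cases js) auto

lemma conj_blocks_ne_Nil [simp]: "conj_blocks js \<noteq> []"
  and hd_conj_blocks [simp]: "hd (conj_blocks js) = (0, True)"
  and nth_0_conj_blocks [simp]: "conj_blocks js ! 0 = (0, True)"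
  by (cases js; simp)+

lemma sublist_conj_blocks:
  "j \<in> set js \<Longrightarrow> sublist [(0, True), (j, True), (0, False), (j, True), (0, True)] (conj_blocks js)"
proof (induction js)
  case (Cons j' js)
  show ?case
  proof (cases "j = j'")
    case True
    obtain ys where "conj_blocks js = (0, True) # ys" using conj_blocks_eq_Cons by blast
    then show ?thesis using True by simp
  qed (use Cons in \<open>auto simp: sublist_Cons_right\<close>)
qed simp

lemma sublist_witness:
  assumes "1 \<le> j" "j < n"
  shows "sublist [(0, True), (j, True)] (witness n i)" "sublist [(j, True), (0, False)] (witness n i)"
    "sublist [(0, False), (j, True)] (witness n i)" "sublist [(j, True), (0, True)] (witness n i)"
proof -
  let ?B = "[(0, True), (j, True), (0, False), (j, True), (0::nat, True)]"
  have "sublist ?B (witness n i)"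
    using sublist_conj_blocks[of j "[1..<n]"] assms
    unfolding witness_def by (auto intro: sublist_order.order.trans)
  moreover have "sublist [(0, True), (j, True)] ?B" "sublist [(j, True), (0, False)] ?B"
    "sublist [(0, False), (j, True)] ?B" "sublist [(j, True), (0, True)] ?B"
    by (simp_all add: sublist_Cons_right)
  ultimately show "sublist [(0, True), (j, True)] (witness n i)"
    "sublist [(j, True), (0, False)] (witness n i)" "sublist [(0, False), (j, True)] (witness n i)"
    "sublist [(j, True), (0, True)] (witness n i)"
    by (meson sublist_order.order.trans)+
qed

lemma last_conj_blocks: "last (conj_blocks js) = (0, True)"
  by (induction js) auto

lemma reduced_conj_blocks: "\<forall>j\<in>set js. 1 \<le> j \<Longrightarrow> reduced (conj_blocks js)"
proof (induction js)
  case (Cons j js)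
  obtain ys where "conj_blocks js = (0, True) # ys" using conj_blocks_eq_Cons by blast
  then show ?case using Cons by auto
qed simp

lemma set_conj_blocks:
  "set (conj_blocks js) \<subseteq> {(0, True), (0, False)} \<union> (\<lambda>j. (j, True)) ` set js"
  by (induction js) auto

lemma witness_in_Fn:
  assumes "2 \<le> n"
  shows "witness n i \<in> Fn n"
proof -
  have "reduced (witness n i)"
    using reduced_conj_blocks[of "[1..<n]"] reduced_replicate[of "Suc i" "(1, True)"]
    by (simp add: witness_def reduced_append_iff last_conj_blocks)
  moreover have "set (witness n i) \<subseteq> {0..<n} \<times> UNIV"
    using set_conj_blocks[of "[1..<n]"] assms by (auto simp: witness_def)
  ultimately show ?thesis by (simp add: Fn_def)
qed

lemma cyc_occ_count_witness_finv: "cyc_occ_count (witness n i) (finv (witness n j)) = 0"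
proof -
  have "witness n i ! (length (witness n i) - 1) = (1, True)"
    by (simp add: witness_def nth_append del: replicate_Suc)
  moreover have "(1, True) \<notin> set (finv (witness n j))"
    using set_conj_blocks[of "[1..<n]"] by (auto simp: witness_def set_finv)
  ultimately have "cyc_occ_positions (witness n i) (finv (witness n j)) = {}"
    by (intro cyc_occ_positions_eq_empty_if_missing[of "length (witness n i) - 1"])
      (auto simp: witness_def)
  then show ?thesis by (simp add: cyc_occ_count_def)
qed

lemma hom_brooks_witness:
  assumes "2 \<le> n"
  shows "hom_brooks n (witness n i) (witness n j) = cyc_occ_count (witness n i) (witness n j)"
proof -
  have "cyclically_reduced (witness n j)"
    by (simp add: cyclically_reduced_def witness_def hd_append conj_blocks_eq_Cons)
  then show ?thesis
    using witness_in_Fn[OF assms]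
    by (simp add: hom_brooks_def cyc_red_id cyc_brooks_def cyc_occ_count_witness_finv)
qed

lemma hom_brooks_witness_self: "2 \<le> n \<Longrightarrow> hom_brooks n (witness n i) (witness n i) \<noteq> 0"
  using hom_brooks_witness[of n i i]
  by (auto simp: cyc_occ_count_def cyc_occ_positions_def witness_def card_eq_0_iff)

lemma hom_brooks_witness_earlier:
  assumes "2 \<le> n" "j < i"
  shows "hom_brooks n (witness n i) (witness n j) = 0"
proof -
  have "cyc_occ_positions (witness n i) (witness n j) = {}"
    using assms(2)
    by (intro cyc_occ_positions_eq_empty_if_longer)
      (auto simp: witness_def nth_append conj_blocks_eq_Cons)
  then show ?thesis using hom_brooks_witness[OF assms(1)] by (simp add: cyc_occ_count_def)
qed

lemma hom_brooks_witness_cut: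
  assumes "2 \<le> n" "w \<in> cut n"
  shows "hom_brooks n (witness n i) w = 0"
proof (rule ccontr)
  let ?u = "witness n i" and ?c = "cyc_red w"
  assume "hom_brooks n ?u w \<noteq> 0"
  have "w \<in> Fn n" "has_cut_vertex n w" using assms(2) by (auto simp: cut_def)
  then have "reduced w" by (simp add: Fn_def)
  have occ: "cyc_occ_positions ?u ?c \<noteq> {} \<or> cyc_occ_positions ?u (finv ?c) \<noteq> {}"
    using \<open>hom_brooks n ?u w \<noteq> 0\<close> \<open>w \<in> Fn n\<close>
    by (auto simp: hom_brooks_def cyc_brooks_def cyc_occ_count_def)
  have sym: "sym (wh_edges w)" by (auto simp: wh_edges_eq sym_def)
  have edge: "(a, inv_letter b) \<in> wh_edges w" "(inv_letter b, a) \<in> wh_edges w"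
    if "sublist [a, b] ?u" for a b
    using cyc_occ_wh_edges[OF \<open>reduced w\<close> that occ] by simp_all
  have joined: "((j, s), (0, True)) \<in> wh_edges w \<and> ((j, s), (0, False)) \<in> wh_edges w"
    if "1 \<le> j" "j < n" for j s
    using edge[OF sublist_witness(1)[OF that]] edge[OF sublist_witness(2)[OF that]]
      edge[OF sublist_witness(3)[OF that]] edge[OF sublist_witness(4)[OF that]]
    by (cases s) auto
  have "graph_connected (wh_vertices n - {v}) (wh_edges w)" if "v \<in> wh_vertices n" for v
    using graph_connected_remove_vertex[OF assms(1) sym joined that] .
  then show False using \<open>has_cut_vertex n w\<close> by (auto simp: has_cut_vertex_def)
qed

lemma hom_brooks_witness_mem:
  assumes "2 \<le> n"
  shows "hom_brooks n (witness n i) \<in> hqm_vanishing_cut n"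
  using quasi_morphism_hom_brooks[of "witness n i"] homogeneous_hom_brooks
    hom_brooks_witness_cut[OF assms]
  by (auto simp: hqm_vanishing_cut_def hom_brooks_def witness_def)

theorem mainTheorem11:
  fixes n :: nat
  assumes "2 \<le> n"
  shows "infinite_dimensional (hqm_vanishing_cut n)"
  unfolding infinite_dimensional_def
proof
  fix N
  let ?q = "\<lambda>i. hom_brooks n (witness n i)"
  have "\<forall>i<N. ?q i \<in> hqm_vanishing_cut n"
    using hom_brooks_witness_mem[OF assms] by blast
  moreover have "\<forall>i<N. c i = 0" if "\<forall>x. (\<Sum>i<N. c i * ?q i x) = 0" for c
    using triangular_family_independent[of ?q "witness n", OF _ _ that]
      hom_brooks_witness_self[OF assms] hom_brooks_witness_earlier[OF assms] by blast
  ultimately show "\<exists>qs. (\<forall>i<N. qs i \<in> hqm_vanishing_cut n) \<and>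
      (\<forall>c. (\<forall>x. (\<Sum>i<N. c i * qs i x) = 0) \<longrightarrow> (\<forall>i<N. c i = 0))"
    by (intro exI[where x = ?q]) blast
qed

end
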